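(* Consider the mesoscopic contact process with sexual reproduction $(\xi_t)$ on $\mathbb{Z}$ with patch size $N\ge 2$, dispersal range $M$ and birth parameters $a,b\ge0$, started from $\xi_0=\mathbf{1}_x$. Call a collision the event that two offspring produced by parents in patch $x$ are sent to the same patch $y\ne x$. For all $M$ sufficiently large: (1) if $a<4$, $P(\text{collision}\mid\xi_0=\mathbf{1}_x)\le M^{-1/3}\big(1/2+bN(1-a/4)^{-1}\big)$; (2) if $a=4$, $P(\text{collision}\mid\xi_0=\mathbf{1}_x)\le M^{-1/3}\big(1/2+(b/2)(N+2)^2\big)$; (3) if $a>4$, $P(\text{collision}\mid\xi_0=\mathbf{1}_x)\le M^{-1/3}\big(1/2+b(a/4-1)^{-2}(a/4)^{N+2}\big)$.
   Context: For $x,y\in\mathbb{Z}$ write $x\sim y$ iff $x\neq y$ and $|x-y|\le M$. The process $\xi_t:\mathbb{Z}\to\{0,\dots,N\}$ counts individuals per patch: $\xi(x)\to\xi(x)-1$ at rate $\xi(x)$; $\xi(x)\to\xi(x)+1$ at rate $\frac{a}{N(N-1)}\xi(x)(\xi(x)-1)(N-\xi(x))$ (offspring of parents in patch $x$ staying in $x$) plus, for each $y\sim x$, rate $\frac{1}{2M}\frac{b}{N(N-1)}\xi(y)(\xi(y)-1)(N-\xi(x))$ (offspring of parents in patch $y$ sent to patch $x$). $\mathbf{1}_x$ is the configuration with $N$ individuals at $x$ and none elsewhere. *)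

theory Defs
  imports "HOL-Probability.Probability"
begin

text \<open>The collision probability is computed
  from the (labelled) embedded jump chain of the continuous-time process.\<close>

text \<open>Elementary transitions: death of one individual in patch z, or birth of
  one individual in patch z from parents in patch y (Birth y z).\<close>
datatype trans = Death int | Birth int int

type_synonym config = "int \<Rightarrow> nat"

text \<open>State of the jump chain: configuration, set of patches y different from x
  that have already received an offspring of parents in patch x, collision flag.\<close>
type_synonym cstate = "config \<times> int set \<times> bool"

definition nbr :: "nat \<Rightarrow> int \<Rightarrow> int \<Rightarrow> bool" where
  "nbr M y z \<longleftrightarrow> y \<noteq> z \<and> \<bar>y - z\<bar> \<le> int M"

definition rate :: "nat \<Rightarrow> nat \<Rightarrow> real \<Rightarrow> real \<Rightarrow> config \<Rightarrow> trans \<Rightarrow> real" where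
  "rate N M a b \<xi> t = (case t of
      Death z \<Rightarrow> real (\<xi> z)
    | Birth y z \<Rightarrow>
        (if y = z then
           a / (real N * (real N - 1)) * real (\<xi> z) * (real (\<xi> z) - 1) * (real N - real (\<xi> z))
         else if nbr M y z then
           (1 / (2 * real M)) * (b / (real N * (real N - 1)))
             * real (\<xi> y) * (real (\<xi> y) - 1) * (real N - real (\<xi> z))
         else 0))"

definition active :: "nat \<Rightarrow> nat \<Rightarrow> real \<Rightarrow> real \<Rightarrow> config \<Rightarrow> trans set" where
  "active N M a b \<xi> = {t. rate N M a b \<xi> t \<noteq> 0}"

definition total_rate :: "nat \<Rightarrow> nat \<Rightarrow> real \<Rightarrow> real \<Rightarrow> config \<Rightarrow> real" where
  "total_rate N M a b \<xi> = (\<Sum>t\<in>active N M a b \<xi>. rate N M a b \<xi> t)"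

fun apply_trans :: "config \<Rightarrow> trans \<Rightarrow> config" where
  "apply_trans \<xi> (Death z) = \<xi>(z := \<xi> z - 1)"
| "apply_trans \<xi> (Birth y z) = \<xi>(z := \<xi> z + 1)"

definition upd :: "int \<Rightarrow> cstate \<Rightarrow> trans \<Rightarrow> cstate" where
  "upd x s t = (case s of (\<xi>, H, c) \<Rightarrow>
     (case t of
        Birth y z \<Rightarrow>
          if y = x \<and> z \<noteq> x then (apply_trans \<xi> t, insert z H, c \<or> z \<in> H)
          else (apply_trans \<xi> t, H, c)
      | Death z \<Rightarrow> (apply_trans \<xi> t, H, c)))"

definition step :: "nat \<Rightarrow> nat \<Rightarrow> real \<Rightarrow> real \<Rightarrow> int \<Rightarrow> cstate \<Rightarrow> cstate pmf" where
  "step N M a b x s = (case s of (\<xi>, H, c) \<Rightarrow>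
     if finite (active N M a b \<xi>) \<and> total_rate N M a b \<xi> > 0
     then map_pmf (upd x s) (embed_pmf (\<lambda>t. rate N M a b \<xi> t / total_rate N M a b \<xi>))
     else return_pmf s)"

fun chain :: "nat \<Rightarrow> nat \<Rightarrow> real \<Rightarrow> real \<Rightarrow> int \<Rightarrow> nat \<Rightarrow> cstate \<Rightarrow> cstate pmf" where
  "chain N M a b x 0 s = return_pmf s"
| "chain N M a b x (Suc n) s = bind_pmf (chain N M a b x n s) (step N M a b x)"

definition one_at :: "nat \<Rightarrow> int \<Rightarrow> config" where
  "one_at N x = (\<lambda>z. if z = x then N else 0)"

text \<open>Probability that a collision ever happens, starting from 1_x
  (limit of the non-decreasing probabilities of a collision within n jumps).\<close>
definition collision_prob :: "nat \<Rightarrow> nat \<Rightarrow> real \<Rightarrow> real \<Rightarrow> int \<Rightarrow> real" where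
  "collision_prob N M a b x =
     (SUP n. measure_pmf.prob (chain N M a b x n (one_at N x, {}, False)) {s. snd (snd s)})"

end

theory Submission
  imports Defs
begin

text \<open>Before the first collision, patch x is the only patch holding more than one
  individual: every other occupied patch holds a single offspring of x and belongs to the
  set H of patches hit so far.  So only x reproduces, k = \<xi> x performs a birth-death
  chain with death rate k and birth rate alpha_k = local_birth_rate N a k, and x emits
  offspring at total rate at most e_k N, where e_k = dispersal_rate N b k, each landing in
  H (a collision) with probability at most |H|/(2M).  Hence the potential
  (|H| A(k) + B(k))/M, set to 1 after a collision, is a supermartingale of the jump chain
  as soon as A and B are nonnegative supersolutions of the birth-death equations with
  sources e_k N/2 and e_k N A(k); these are built by backward recursion from k = N, where
  alpha_N = 0.  The collision probability is thus at most B(N)/M, which lies below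
  M^(-1/3)/2 for large M.\<close>

text \<open>backward_increment N al c j is the increment d_k = A k - A (k - 1), k = N - j, of the
  supersolution below: it solves k d_k = c_k + al_k d_(k+1) downwards from d_(N+1) = 0.\<close>
fun backward_increment :: "nat \<Rightarrow> (nat \<Rightarrow> real) \<Rightarrow> (nat \<Rightarrow> real) \<Rightarrow> nat \<Rightarrow> real" where
  "backward_increment N al c 0 = c N / real N"
| "backward_increment N al c (Suc j) =
     (c (N - Suc j) + al (N - Suc j) * backward_increment N al c j) / real (N - Suc j)"

definition birth_death_generator :: "(nat \<Rightarrow> real) \<Rightarrow> (nat \<Rightarrow> real) \<Rightarrow> nat \<Rightarrow> real" where
  "birth_death_generator al f k = real k * (f (k - 1) - f k) + al k * (f (k + 1) - f k)"

lemma backward_increment_nonneg: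
  assumes "\<And>k. k \<le> N \<Longrightarrow> al k \<ge> 0" "\<And>k. k \<le> N \<Longrightarrow> c k \<ge> 0"
  shows "backward_increment N al c j \<ge> 0"
  by (induction j) (simp_all add: assms)

lemma birth_death_supersolution:
  fixes al c :: "nat \<Rightarrow> real"
  assumes al_nonneg: "\<And>k. k \<le> N \<Longrightarrow> al k \<ge> 0" and c_nonneg: "\<And>k. k \<le> N \<Longrightarrow> c k \<ge> 0"
    and "al 0 = 0" "c 0 = 0" "al N = 0"
  shows "\<exists>A. (\<forall>k. A k \<ge> 0) \<and>
           (\<forall>k\<le>N. birth_death_generator al A k + c k \<le> 0)"
proof -
  define d where "d k = backward_increment N al c (N - k)" for k
  define A where "A k = (\<Sum>i\<in>{1..k}. d i)" for k
  have "real k * d k = c k + al k * d (k + 1)" if "k \<in> {1..N}" for k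
  proof (cases "k = N")
    case True
    then show ?thesis using that \<open>al N = 0\<close> by (simp add: d_def)
  next
    case False
    then have "N - k = Suc (N - (k + 1))" "N - Suc (N - (k + 1)) = k" using that by auto
    then show ?thesis using that unfolding d_def by (simp only: backward_increment.simps) simp
  qed
  then have "birth_death_generator al A k + c k \<le> 0" if "k \<le> N" for k
    using that assms(3,4)
    by (cases k) (fastforce simp: A_def birth_death_generator_def algebra_simps)+
  moreover have "A k \<ge> 0" for k
    unfolding A_def d_def using backward_increment_nonneg[OF al_nonneg c_nonneg] by (simp add: sum_nonneg)
  ultimately show ?thesis by blast
qed

lemma of_nat_mult_pred_nonneg: "real k * (real k - 1) \<ge> 0"
  by (cases k) auto

definition local_birth_rate :: "nat \<Rightarrow> real \<Rightarrow> nat \<Rightarrow> real" where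
  "local_birth_rate N a k = a / (real N * (real N - 1)) * real k * (real k - 1) * (real N - real k)"

definition dispersal_rate :: "nat \<Rightarrow> real \<Rightarrow> nat \<Rightarrow> real" where
  "dispersal_rate N b k = b / (real N * (real N - 1)) * real k * (real k - 1)"

lemma local_birth_rate_nonneg:
  assumes "a \<ge> 0" "k \<le> N" shows "local_birth_rate N a k \<ge> 0"
proof -
  have "a / (real N * (real N - 1)) * (real k * (real k - 1)) * (real N - real k) \<ge> 0"
    using assms by (intro of_nat_mult_pred_nonneg mult_nonneg_nonneg divide_nonneg_nonneg) auto
  then show ?thesis unfolding local_birth_rate_def by (simp add: mult.assoc)
qed

lemma dispersal_rate_nonneg:
  assumes "b \<ge> 0" shows "dispersal_rate N b k \<ge> 0"
proof -
  have "b / (real N * (real N - 1)) * (real k * (real k - 1)) \<ge> 0"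
    using assms by (intro of_nat_mult_pred_nonneg mult_nonneg_nonneg divide_nonneg_nonneg) auto
  then show ?thesis unfolding dispersal_rate_def by (simp add: mult.assoc)
qed

lemma potential_coefficients_exist:
  fixes N :: nat and a b :: real
  assumes "a \<ge> 0" "b \<ge> 0"
  obtains A B :: "nat \<Rightarrow> real" where "\<And>k. A k \<ge> 0" "\<And>k. B k \<ge> 0"
    "\<And>k. k \<le> N \<Longrightarrow> birth_death_generator (local_birth_rate N a) A k + dispersal_rate N b k * real N / 2 \<le> 0"
    "\<And>k. k \<le> N \<Longrightarrow> birth_death_generator (local_birth_rate N a) B k + dispersal_rate N b k * real N * A k \<le> 0"
proof -
  have coeffs: "\<And>k. k \<le> N \<Longrightarrow> local_birth_rate N a k \<ge> 0" "local_birth_rate N a 0 = 0"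
    "local_birth_rate N a N = 0" "\<And>k. dispersal_rate N b k \<ge> 0" "dispersal_rate N b 0 = 0"
    using assms local_birth_rate_nonneg dispersal_rate_nonneg
    by (auto simp: local_birth_rate_def dispersal_rate_def)
  obtain A where A: "\<And>k. A k \<ge> 0"
    "\<And>k. k \<le> N \<Longrightarrow> birth_death_generator (local_birth_rate N a) A k + dispersal_rate N b k * real N / 2 \<le> 0"
    using birth_death_supersolution[of N "local_birth_rate N a" "\<lambda>k. dispersal_rate N b k * real N / 2"]
      coeffs by auto
  moreover obtain B where "\<And>k. B k \<ge> 0"
    "\<And>k. k \<le> N \<Longrightarrow> birth_death_generator (local_birth_rate N a) B k + dispersal_rate N b k * real N * A k \<le> 0"
    using birth_death_supersolution[of N "local_birth_rate N a" "\<lambda>k. dispersal_rate N b k * real N * A k"]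
      coeffs A(1) by auto
  ultimately show ?thesis using that by blast
qed

definition only_x_breeds :: "nat \<Rightarrow> int \<Rightarrow> cstate \<Rightarrow> bool" where
  "only_x_breeds N x s = (case s of (\<xi>, H, c) \<Rightarrow> c \<or> (\<xi> x \<le> N \<and> finite H \<and>
      (\<forall>z. z \<noteq> x \<longrightarrow> \<xi> z \<le> 1 \<and> (\<xi> z \<noteq> 0 \<longrightarrow> z \<in> H))))"

lemma only_x_breeds_one_at: "only_x_breeds N x (one_at N x, {}, False)"
  unfolding only_x_breeds_def one_at_def by auto

lemma collision_upd: "snd (snd s) \<Longrightarrow> snd (snd (upd x s t))"
  by (cases s; cases t) (auto simp: upd_def)

lemma collision_step:
  "snd (snd s) \<Longrightarrow> s' \<in> set_pmf (step N M a b x s) \<Longrightarrow> snd (snd s')"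
  using collision_upd by (cases s) (auto simp: step_def split: if_splits)

locale mesoscopic_cp =
  fixes N M :: nat and a b :: real and x :: int
  assumes N_ge_2: "N \<ge> 2" and a_nonneg: "a \<ge> 0" and b_nonneg: "b \<ge> 0"
begin

lemma config_le_N:
  assumes "only_x_breeds N x (\<xi>, H, False)" shows "\<xi> z \<le> N"
  using assms N_ge_2 unfolding only_x_breeds_def by (cases "z = x") fastforce+

lemma rate_Birth:
  "rate N M a b \<xi> (Birth y z) =
     (if y = z then a / (real N * (real N - 1))
      else if nbr M y z then 1 / (2 * real M) * (b / (real N * (real N - 1))) else 0)
     * (real (\<xi> y) * (real (\<xi> y) - 1)) * (real N - real (\<xi> z))"
  by (simp add: rate_def)

lemma rate_nonneg:
  assumes "only_x_breeds N x (\<xi>, H, False)" shows "rate N M a b \<xi> t \<ge> 0"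
proof (cases t)
  case (Birth y z)
  have "real N - real (\<xi> z) \<ge> 0" using config_le_N[OF assms] by simp
  moreover have "real N * (real N - 1) > 0" using N_ge_2 by simp
  ultimately show ?thesis unfolding Birth rate_Birth using a_nonneg b_nonneg
    by (intro mult_nonneg_nonneg[OF mult_nonneg_nonneg[OF _ of_nat_mult_pred_nonneg]]) auto
qed (simp add: rate_def)

lemma rate_Birth_from_other:
  assumes "only_x_breeds N x (\<xi>, H, False)" "y \<noteq> x" shows "rate N M a b \<xi> (Birth y z) = 0"
proof -
  have "\<xi> y = 0 \<or> \<xi> y = 1" using assms unfolding only_x_breeds_def by fastforce
  then show ?thesis unfolding rate_def by auto
qed

lemma upd_preserves_only_x_breeds:
  assumes I: "only_x_breeds N x (\<xi>, H, False)" and r: "rate N M a b \<xi> t \<noteq> 0"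
  shows "only_x_breeds N x (upd x (\<xi>, H, False) t)"
proof (cases t)
  case (Death z)
  then show ?thesis using I unfolding only_x_breeds_def upd_def by auto
next
  case (Birth y z)
  then have "y = x" using rate_Birth_from_other[OF I] r by blast
  show ?thesis
  proof (cases "z = x")
    case True
    then have "\<xi> x < N" using r I \<open>y = x\<close> Birth by (auto simp: rate_def only_x_breeds_def)
    then show ?thesis using I True \<open>y = x\<close> Birth unfolding only_x_breeds_def upd_def by auto
  next
    case False
    then show ?thesis using I \<open>y = x\<close> Birth unfolding only_x_breeds_def upd_def by auto
  qed
qed

lemma jump_distribution:
  assumes I: "only_x_breeds N x (\<xi>, H, False)"
    and fin: "finite (active N M a b \<xi>)" and R: "total_rate N M a b \<xi> > 0"
  defines "p \<equiv> embed_pmf (\<lambda>t. rate N M a b \<xi> t / total_rate N M a b \<xi>)"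
  shows "pmf p t = rate N M a b \<xi> t / total_rate N M a b \<xi>" and "set_pmf p \<subseteq> active N M a b \<xi>"
proof -
  let ?f = "\<lambda>t. rate N M a b \<xi> t / total_rate N M a b \<xi>"
  have nonneg: "\<And>t. 0 \<le> ?f t" using rate_nonneg[OF I] R by simp
  have "(\<integral>\<^sup>+t. ennreal (?f t) \<partial>count_space UNIV) = (\<Sum>t\<in>active N M a b \<xi>. ennreal (?f t))"
    using fin unfolding active_def by (intro nn_integral_count_space') auto
  also have "\<dots> = ennreal (\<Sum>t\<in>active N M a b \<xi>. ?f t)"
    using nonneg by (simp add: sum_ennreal)
  also have "(\<Sum>t\<in>active N M a b \<xi>. ?f t) = 1"
    using R by (simp add: sum_divide_distrib[symmetric] total_rate_def)
  finally have total: "(\<integral>\<^sup>+t. ennreal (?f t) \<partial>count_space UNIV) = 1" by simp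
  show "pmf p t = ?f t" unfolding p_def by (rule pmf_embed_pmf[OF nonneg total])
  show "set_pmf p \<subseteq> active N M a b \<xi>"
    unfolding p_def set_embed_pmf[OF nonneg total] by (auto simp: active_def)
qed

lemma step_preserves_only_x_breeds:
  assumes I: "only_x_breeds N x s" and s': "s' \<in> set_pmf (step N M a b x s)"
  shows "only_x_breeds N x s'"
proof -
  obtain \<xi> H c where s: "s = (\<xi>, H, c)" by (cases s)
  show ?thesis
  proof (cases "\<not> c \<and> finite (active N M a b \<xi>) \<and> total_rate N M a b \<xi> > 0")
    case True
    with I s have I': "only_x_breeds N x (\<xi>, H, False)" by simp
    from s' True obtain t where "t \<in> active N M a b \<xi>" "s' = upd x (\<xi>, H, False) t"
      using jump_distribution(2)[OF I'] unfolding s step_def by auto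
    then show ?thesis using upd_preserves_only_x_breeds[OF I'] by (simp add: active_def)
  next
    case False
    then have "c \<or> s' = s" using s' unfolding s step_def by auto
    then show ?thesis using I collision_step[OF _ s'] s
      by (cases s') (auto simp: only_x_breeds_def)
  qed
qed

lemma chain_preserves_only_x_breeds:
  "only_x_breeds N x s0 \<Longrightarrow> s \<in> set_pmf (chain N M a b x n s0) \<Longrightarrow> only_x_breeds N x s"
  by (induction n arbitrary: s) (auto intro: step_preserves_only_x_breeds)

end

lemma nbr_finite_card_le:
  "finite {z. nbr M x z} \<and> card {z. nbr M x z} \<le> 2 * M"
proof -
  have sub: "{z. nbr M x z} \<subseteq> {x - int M .. x + int M} - {x}" unfolding nbr_def by auto
  then have "card {z. nbr M x z} \<le> card ({x - int M .. x + int M} - {x})" by (intro card_mono) auto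
  also have "\<dots> = 2 * M" by (simp add: card_Diff_singleton)
  finally show ?thesis using sub finite_subset by blast
qed

locale collision_potential = mesoscopic_cp +
  fixes A B :: "nat \<Rightarrow> real"
  assumes M_pos: "M \<ge> 1" and A_nonneg: "\<And>k. A k \<ge> 0" and B_nonneg: "\<And>k. B k \<ge> 0"
    and A_supersolution: "\<And>k. k \<le> N \<Longrightarrow>
      birth_death_generator (local_birth_rate N a) A k + dispersal_rate N b k * real N / 2 \<le> 0"
    and B_supersolution: "\<And>k. k \<le> N \<Longrightarrow>
      birth_death_generator (local_birth_rate N a) B k + dispersal_rate N b k * real N * A k \<le> 0"
begin

definition potential :: "cstate \<Rightarrow> real" where
  "potential s = (case s of (\<xi>, H, c) \<Rightarrow>
     if c then 1 else (real (card H) * A (\<xi> x) + B (\<xi> x)) / real M)"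

lemma potential_nonneg: "potential s \<ge> 0"
  using A_nonneg B_nonneg by (cases s) (auto simp: potential_def)

definition increment_bound :: "config \<Rightarrow> int set \<Rightarrow> trans \<Rightarrow> real" where
  "increment_bound \<xi> H t = (case t of
       Death z \<Rightarrow> if z = x then potential (upd x (\<xi>, H, False) t) - potential (\<xi>, H, False) else 0
     | Birth y z \<Rightarrow>
         if y \<noteq> x then 0
         else if z = x then potential (upd x (\<xi>, H, False) t) - potential (\<xi>, H, False)
         else if nbr M x z then (if z \<in> H then 1 else 0) + A (\<xi> x) / real M
         else 0)"

lemma potential_increment_le:
  assumes I: "only_x_breeds N x (\<xi>, H, False)" and r: "rate N M a b \<xi> t \<noteq> 0"
  shows "potential (upd x (\<xi>, H, False) t) - potential (\<xi>, H, False) \<le> increment_bound \<xi> H t"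
proof (cases t)
  case (Death z)
  then show ?thesis by (auto simp: increment_bound_def potential_def upd_def)
next
  case (Birth y z)
  then have "y = x" using rate_Birth_from_other[OF I] r by blast
  have "nbr M x z" if "z \<noteq> x" using r Birth \<open>y = x\<close> that by (auto simp: rate_def split: if_splits)
  moreover have "finite H" using I by (simp add: only_x_breeds_def)
  ultimately show ?thesis using Birth \<open>y = x\<close> potential_nonneg[of "(\<xi>, H, False)"] A_nonneg M_pos
    by (auto simp: increment_bound_def potential_def upd_def add_divide_distrib algebra_simps)
qed

lemma sum_rate_increment_bound:
  assumes fin: "finite (active N M a b \<xi>)"
  shows "(\<Sum>t\<in>active N M a b \<xi>. rate N M a b \<xi> t * increment_bound \<xi> H t)
    = real (\<xi> x) * increment_bound \<xi> H (Death x)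
      + local_birth_rate N a (\<xi> x) * increment_bound \<xi> H (Birth x x)
      + (\<Sum>z\<in>{z. nbr M x z}. rate N M a b \<xi> (Birth x z) * ((if z \<in> H then 1 else 0) + A (\<xi> x) / real M))"
proof -
  let ?r = "rate N M a b \<xi>" and ?G = "increment_bound \<xi> H" and ?Nb = "{z. nbr M x z}"
  define S where "S = insert (Death x) (insert (Birth x x) (Birth x ` ?Nb))"
  have finNb: "finite ?Nb" and "x \<notin> ?Nb"
    using nbr_finite_card_le by (auto simp: nbr_def)
  then have finS: "finite S" unfolding S_def by simp
  have "(\<Sum>t\<in>active N M a b \<xi>. ?r t * ?G t) = (\<Sum>t\<in>active N M a b \<xi> \<union> S. ?r t * ?G t)"
    using fin finS by (intro sum.mono_neutral_left) (auto simp: active_def)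
  also have "\<dots> = (\<Sum>t\<in>S. ?r t * ?G t)"
    using fin finS by (intro sum.mono_neutral_right) (auto simp: S_def increment_bound_def split: trans.splits)
  also have "\<dots> = ?r (Death x) * ?G (Death x) + ?r (Birth x x) * ?G (Birth x x)
      + (\<Sum>z\<in>?Nb. ?r (Birth x z) * ?G (Birth x z))"
    unfolding S_def using finNb \<open>x \<notin> ?Nb\<close> by (simp add: image_iff sum.reindex inj_on_def)
  also have "(\<Sum>z\<in>?Nb. ?r (Birth x z) * ?G (Birth x z))
      = (\<Sum>z\<in>?Nb. ?r (Birth x z) * ((if z \<in> H then 1 else 0) + A (\<xi> x) / real M))"
    by (rule sum.cong) (auto simp: increment_bound_def nbr_def)
  finally show ?thesis by (simp add: rate_def local_birth_rate_def)
qed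

lemma dispersal_sum_le:
  assumes I: "only_x_breeds N x (\<xi>, H, False)"
  shows "(\<Sum>z\<in>{z. nbr M x z}. rate N M a b \<xi> (Birth x z) * ((if z \<in> H then 1 else 0) + A (\<xi> x) / real M))
    \<le> dispersal_rate N b (\<xi> x) * real N / (2 * real M) * (real (card H) + 2 * A (\<xi> x))"
proof -
  let ?Nb = "{z. nbr M x z}"
  define c where "c = dispersal_rate N b (\<xi> x) * real N / (2 * real M)"
  have M: "real M > 0" using M_pos by simp
  have finNb: "finite ?Nb" and cardNb: "card ?Nb \<le> 2 * M" using nbr_finite_card_le by auto
  have "finite H" using I by (simp add: only_x_breeds_def)
  have "rate N M a b \<xi> (Birth x z) \<le> c" if "z \<in> ?Nb" for z
  proof -
    have "rate N M a b \<xi> (Birth x z) = dispersal_rate N b (\<xi> x) * (real N - real (\<xi> z)) / (2 * real M)"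
      using that by (simp add: rate_def nbr_def dispersal_rate_def)
    also have "\<dots> \<le> c" unfolding c_def
      using dispersal_rate_nonneg[OF b_nonneg] M by (intro divide_right_mono mult_left_mono) auto
    finally show ?thesis .
  qed
  then have "(\<Sum>z\<in>?Nb. rate N M a b \<xi> (Birth x z) * ((if z \<in> H then 1 else 0) + A (\<xi> x) / real M))
      \<le> (\<Sum>z\<in>?Nb. c * ((if z \<in> H then 1 else 0) + A (\<xi> x) / real M))"
    using A_nonneg M by (intro sum_mono mult_right_mono) auto
  also have "\<dots> = c * (real (card (?Nb \<inter> H)) + real (card ?Nb) * (A (\<xi> x) / real M))"
  proof -
    have "(\<Sum>z\<in>?Nb. if z \<in> H then 1 else 0 :: real) = real (card (?Nb \<inter> H))"
      using sum.inter_filter[OF finNb, of "\<lambda>_. 1 :: real" "\<lambda>z. z \<in> H"] by (simp add: Int_def)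
    then show ?thesis by (simp add: sum_distrib_left[symmetric] sum.distrib del: sum_distrib_left)
  qed
  also have "\<dots> \<le> c * (real (card H) + 2 * A (\<xi> x))"
  proof (intro mult_left_mono add_mono)
    show "real (card (?Nb \<inter> H)) \<le> real (card H)" using \<open>finite H\<close> by (simp add: card_mono)
    have "real (card ?Nb) * (A (\<xi> x) / real M) \<le> real (2 * M) * (A (\<xi> x) / real M)"
      using cardNb A_nonneg M by (intro mult_right_mono) auto
    then show "real (card ?Nb) * (A (\<xi> x) / real M) \<le> 2 * A (\<xi> x)" using M by simp
    show "0 \<le> c" unfolding c_def using dispersal_rate_nonneg[OF b_nonneg] M by simp
  qed
  finally show ?thesis unfolding c_def .
qed

lemma potential_drift_nonpos:
  assumes I: "only_x_breeds N x (\<xi>, H, False)" and fin: "finite (active N M a b \<xi>)"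
  shows "(\<Sum>t\<in>active N M a b \<xi>. rate N M a b \<xi> t * potential (upd x (\<xi>, H, False) t))
    \<le> total_rate N M a b \<xi> * potential (\<xi>, H, False)"
proof -
  let ?act = "active N M a b \<xi>" and ?r = "rate N M a b \<xi>" and ?F0 = "potential (\<xi>, H, False)"
    and ?G = "increment_bound \<xi> H" and ?k = "\<xi> x" and ?h = "real (card H)"
    and ?e = "dispersal_rate N b (\<xi> x)" and ?L = "birth_death_generator (local_birth_rate N a)"
  have M: "real M > 0" using M_pos by simp
  have "?k \<le> N" using config_le_N[OF I] .
  have "(\<Sum>t\<in>?act. ?r t * potential (upd x (\<xi>, H, False) t)) - total_rate N M a b \<xi> * ?F0
      = (\<Sum>t\<in>?act. ?r t * (potential (upd x (\<xi>, H, False) t) - ?F0))"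
    by (simp add: total_rate_def right_diff_distrib sum_subtractf sum_distrib_right)
  also have "\<dots> \<le> (\<Sum>t\<in>?act. ?r t * ?G t)"
    using potential_increment_le[OF I] rate_nonneg[OF I]
    by (intro sum_mono mult_left_mono) (auto simp: active_def)
  also have "\<dots> \<le> real ?k * ?G (Death x) + local_birth_rate N a ?k * ?G (Birth x x)
      + ?e * real N / (2 * real M) * (?h + 2 * A ?k)"
    unfolding sum_rate_increment_bound[OF fin] using dispersal_sum_le[OF I] by simp
  also have "\<dots> = (?h * (?L A ?k + ?e * real N / 2) + (?L B ?k + ?e * real N * A ?k)) / real M"
    using M by (simp add: increment_bound_def potential_def upd_def birth_death_generator_def field_simps)
  also have "\<dots> \<le> 0"
    using A_supersolution[OF \<open>?k \<le> N\<close>] B_supersolution[OF \<open>?k \<le> N\<close>] M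
    by (intro divide_nonpos_pos[OF add_nonpos_nonpos[OF mult_nonneg_nonpos]]) auto
  finally show ?thesis by simp
qed

lemma step_potential_le:
  assumes I: "only_x_breeds N x s"
  shows "(\<integral>\<^sup>+s'. potential s' \<partial>step N M a b x s) \<le> potential s"
proof -
  obtain \<xi> H c where s: "s = (\<xi>, H, c)" by (cases s)
  show ?thesis
  proof (cases "\<not> c \<and> finite (active N M a b \<xi>) \<and> total_rate N M a b \<xi> > 0")
    case True
    with I s have I': "only_x_breeds N x (\<xi>, H, False)" by simp
    let ?act = "active N M a b \<xi>" and ?R = "total_rate N M a b \<xi>"
    let ?p = "embed_pmf (\<lambda>t. rate N M a b \<xi> t / ?R)"
    have "(\<integral>\<^sup>+s'. potential s' \<partial>step N M a b x s)
        = (\<integral>\<^sup>+t. potential (upd x (\<xi>, H, False) t) \<partial>?p)"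
      using True unfolding s step_def by simp
    also have "\<dots> = (\<Sum>t\<in>?act. ennreal (potential (upd x (\<xi>, H, False) t)) * pmf ?p t)"
      using True jump_distribution(2)[OF I'] by (intro nn_integral_measure_pmf_support) auto
    also have "\<dots> = ennreal (\<Sum>t\<in>?act. rate N M a b \<xi> t * potential (upd x (\<xi>, H, False) t) / ?R)"
      using True jump_distribution(1)[OF I'] rate_nonneg[OF I'] potential_nonneg
      by (simp add: sum_ennreal ennreal_mult[symmetric] mult.commute)
    also have "\<dots> \<le> potential s"
      using potential_drift_nonpos[OF I'] True s
      by (intro ennreal_leI) (auto simp: sum_divide_distrib[symmetric] pos_divide_le_eq mult.commute)
    finally show ?thesis .
  next
    case False
    then have "c \<or> step N M a b x s = return_pmf s" unfolding s step_def by auto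
    moreover have "(\<integral>\<^sup>+s'. potential s' \<partial>step N M a b x s) = 1" if c
    proof -
      have "potential s' = 1" if "s' \<in> set_pmf (step N M a b x s)" for s'
        using collision_step[OF _ that] \<open>c\<close> s by (cases s') (simp add: potential_def)
      then have "(\<integral>\<^sup>+s'. potential s' \<partial>step N M a b x s) = (\<integral>\<^sup>+s'. 1 \<partial>step N M a b x s)"
        by (intro nn_integral_cong_AE) (simp add: AE_measure_pmf_iff)
      then show ?thesis by simp
    qed
    ultimately show ?thesis using s by (auto simp: potential_def)
  qed
qed

lemma chain_potential_le:
  assumes "only_x_breeds N x s0"
  shows "(\<integral>\<^sup>+s. potential s \<partial>chain N M a b x n s0) \<le> potential s0"
proof (induction n)
  case (Suc n)
  have "(\<integral>\<^sup>+s. potential s \<partial>chain N M a b x (Suc n) s0)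
      = (\<integral>\<^sup>+s. (\<integral>\<^sup>+s'. potential s' \<partial>step N M a b x s) \<partial>chain N M a b x n s0)"
    by (simp add: nn_integral_bind_pmf)
  also have "\<dots> \<le> (\<integral>\<^sup>+s. potential s \<partial>chain N M a b x n s0)"
    using step_potential_le chain_preserves_only_x_breeds[OF assms]
    by (intro nn_integral_mono_AE) (simp add: AE_measure_pmf_iff)
  finally show ?case using Suc.IH by simp
qed simp

lemma collision_prob_le: "collision_prob N M a b x \<le> B N / real M"
  unfolding collision_prob_def
proof (rule cSUP_least)
  fix n
  let ?p = "chain N M a b x n (one_at N x, {}, False)"
  have "emeasure ?p {s. snd (snd s)} = (\<integral>\<^sup>+s. indicator {s. snd (snd s)} s \<partial>?p)"
    by simp
  also have "\<dots> \<le> (\<integral>\<^sup>+s. potential s \<partial>?p)"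
    by (intro nn_integral_mono) (auto simp: potential_def indicator_def)
  also have "\<dots> \<le> potential (one_at N x, {}, False)"
    by (rule chain_potential_le[OF only_x_breeds_one_at])
  also have "\<dots> = B N / real M" by (simp add: potential_def one_at_def)
  finally show "measure_pmf.prob ?p {s. snd (snd s)} \<le> B N / real M"
    using B_nonneg M_pos by (simp add: measure_pmf.emeasure_eq_measure)
qed simp

end

lemma collision_prob_le_div_M:
  fixes N :: nat and a b :: real
  assumes "N \<ge> 2" and "a \<ge> 0" and "b \<ge> 0"
  obtains C where "C \<ge> 0" "\<And>M x. M \<ge> 1 \<Longrightarrow> collision_prob N M a b x \<le> C / real M"
proof -
  obtain A B where coeffs: "\<And>k. A k \<ge> 0" "\<And>k. B k \<ge> 0"
    "\<And>k. k \<le> N \<Longrightarrow> birth_death_generator (local_birth_rate N a) A k + dispersal_rate N b k * real N / 2 \<le> 0"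
    "\<And>k. k \<le> N \<Longrightarrow> birth_death_generator (local_birth_rate N a) B k + dispersal_rate N b k * real N * A k \<le> 0"
    using potential_coefficients_exist[OF assms(2,3)] by blast
  have "collision_prob N M a b x \<le> B N / real M" if "M \<ge> 1" for M x
  proof -
    interpret collision_potential N M a b x A B
      using assms that coeffs by unfold_locales auto
    show ?thesis by (rule collision_prob_le)
  qed
  then show ?thesis using that coeffs(2) by blast
qed

lemma divide_le_half_powr_neg_third:
  fixes C :: real and M :: nat
  assumes "C \<ge> 0" and "real M \<ge> (2 * C + 1) ^ 3"
  shows "C / real M \<le> real M powr (-1/3) / 2"
proof -
  define K where "K = 2 * C + 1"
  have "K \<ge> 1" using assms(1) by (simp add: K_def)
  then have M: "real M > 0" using assms(2) one_le_power[of K 3] unfolding K_def by linarith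
  have "K = root 3 (K ^ 3)" using \<open>K \<ge> 1\<close> by (simp add: real_root_power_cancel)
  also have "\<dots> \<le> root 3 (real M)" using assms(2) by (simp add: K_def)
  also have "\<dots> = real M powr (1/3)" using M by (simp add: root_powr_inverse)
  finally have "K \<le> real M powr (1/3)" .
  then have "K * K \<le> real M powr (1/3) * real M powr (1/3)"
    using \<open>K \<ge> 1\<close> by (intro mult_mono) auto
  moreover have "K \<le> K * K" using \<open>K \<ge> 1\<close> mult_left_mono[of 1 K K] by simp
  ultimately have "2 * C \<le> real M powr (1/3) * real M powr (1/3)" unfolding K_def by linarith
  also have "\<dots> = real M powr (-1/3) * real M powr 1"
    by (simp only: powr_add[symmetric]) simp
  finally show ?thesis using M by (simp add: divide_le_eq)
qed

theorem lemma5p2: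
  fixes N :: nat and a b :: real
  assumes "N \<ge> 2" and "a \<ge> 0" and "b \<ge> 0"
  shows "\<exists>M0::nat. \<forall>M\<ge>M0. \<forall>x::int.
     (a < 4 \<longrightarrow> collision_prob N M a b x
        \<le> real M powr (-1/3) * (1/2 + b * real N * inverse (1 - a/4)))
   \<and> (a = 4 \<longrightarrow> collision_prob N M a b x
        \<le> real M powr (-1/3) * (1/2 + (b/2) * (real N + 2)^2))
   \<and> (a > 4 \<longrightarrow> collision_prob N M a b x
        \<le> real M powr (-1/3) * (1/2 + b * inverse ((a/4 - 1)^2) * (a/4) ^ (N + 2)))"
proof -
  obtain C where C: "C \<ge> 0" "\<And>M x. M \<ge> 1 \<Longrightarrow> collision_prob N M a b x \<le> C / real M"
    using collision_prob_le_div_M[OF assms] by blast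
  define M0 where "M0 = nat \<lceil>(2 * C + 1) ^ 3\<rceil> + 1"
  have bound: "collision_prob N M a b x \<le> real M powr (-1/3) * (1/2 + D)"
    if "M \<ge> M0" and "D \<ge> 0" for M x D
  proof -
    have "M \<ge> 1" and M_large: "real M \<ge> (2 * C + 1) ^ 3" using that(1) unfolding M0_def by linarith+
    have "collision_prob N M a b x \<le> C / real M" using \<open>M \<ge> 1\<close> by (rule C(2))
    also have "\<dots> \<le> real M powr (-1/3) / 2" using C(1) M_large by (rule divide_le_half_powr_neg_third)
    also have "\<dots> \<le> real M powr (-1/3) * (1/2 + D)" using that(2) by (simp add: algebra_simps)
    finally show ?thesis .
  qed
  have "b * real N * inverse (1 - a/4) \<ge> 0" if "a < 4" using that assms(3) by simp
  moreover have "(b/2) * (real N + 2)^2 \<ge> 0" using assms(3) by simp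
  moreover have "b * inverse ((a/4 - 1)^2) * (a/4) ^ (N + 2) \<ge> 0" using assms(2,3) by simp
  ultimately show ?thesis by (intro exI[of _ M0] allI impI conjI bound) auto
qed

end
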